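(* Let $n\ge 3$ and let the sites $\{1,\dots,n\}$ of a qubit chain be partitioned into three nonempty consecutive intervals $L=\{1,\dots,a\}$, $C=\{a+1,\dots,a+k\}$, $R=\{a+k+1,\dots,n\}$. Let $W\in \mathrm{Sp}(2n,\mathbb{Z}_2)$ and write $\mathbb{Z}_2^{2n}=V_L\oplus V_C\oplus V_R$, vectors as $(l,c,r)$. Then the following are equivalent: (i) (wall to initial conditions) there exists a linear subspace $G\subseteq V_C$ such that for all integers $t\ge 0$ and all $u\in V_L$, $W^t(u,0,0)\in V_L\oplus G\oplus\{0\}$; (ii) (wall to input signals) there exists a linear subspace $G'\subseteq V_C$ such that for every finitely supported function $u:\mathbb{Z}_{\ge 0}\to V_L$, $\sum_{t\ge 0} W^t(u(t),0,0)\in V_L\oplus G'\oplus\{0\}$.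
   Context: Pauli operators on $n$ qubits modulo phases are identified with $\mathbb{Z}_2^{2n}$ via $(p_1,q_1,\dots,p_n,q_n)\mapsto X^{p_1}Z^{q_1}\otimes\cdots\otimes X^{p_n}Z^{q_n}$. The binary symplectic form is $J=\bigoplus_{i=1}^n \begin{pmatrix}0&1\\1&0\end{pmatrix}$, and $\mathrm{Sp}(2n,\mathbb{Z}_2)=\{S: SJS^T=J\}$; every Clifford unitary $U$ induces such a matrix $W$ with $UP_bU^\dagger\propto P_{Wb}$. For a set of sites $S$, $V_S\subseteq\mathbb{Z}_2^{2n}$ denotes the subspace of vectors whose coordinates $(p_i,q_i)$ vanish for all $i\notin S$. *)

theory Defs
  imports "Jordan_Normal_Form.Matrix" "HOL-Library.Z2"
begin

text \<open>Pauli vectors on n qubits: bit vectors of dimension 2n; coordinates 2(i-1), 2(i-1)+1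
  (0-based) are (p_i, q_i) of site i in {1..n}.\<close>

definition sympJ :: "nat \<Rightarrow> bit mat" where
  "sympJ n = mat (2*n) (2*n) (\<lambda>(i,j). if i div 2 = j div 2 \<and> i \<noteq> j then 1 else 0)"

definition Sp2 :: "nat \<Rightarrow> bit mat set" where
  "Sp2 n = {S. S \<in> carrier_mat (2*n) (2*n) \<and> S * sympJ n * transpose_mat S = sympJ n}"

definition Vsites :: "nat \<Rightarrow> nat set \<Rightarrow> bit vec set" where
  "Vsites n S = {v \<in> carrier_vec (2*n). \<forall>j<2*n. Suc (j div 2) \<notin> S \<longrightarrow> v $ j = 0}"

definition lin_subspace :: "nat \<Rightarrow> bit vec set \<Rightarrow> bool" where
  "lin_subspace n G \<longleftrightarrow> G \<subseteq> carrier_vec n \<and> 0\<^sub>v n \<in> G \<and>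
     (\<forall>x\<in>G. \<forall>y\<in>G. x + y \<in> G) \<and> (\<forall>c x. x \<in> G \<longrightarrow> c \<cdot>\<^sub>v x \<in> G)"

definition dsum_LG :: "bit vec set \<Rightarrow> bit vec set \<Rightarrow> bit vec set" where
  "dsum_LG VL G = {l + g | l g. l \<in> VL \<and> g \<in> G}"

end

theory Submission
  imports Defs
begin

text \<open>Since \<open>V\<^sub>L \<oplus> G \<oplus> {0}\<close> is a linear subspace, it contains the finite sum of the
  responses \<open>W\<^sup>t (u(t),0,0)\<close> as soon as it contains each of them; conversely, the response
  to a single vector \<open>u\<close> at time \<open>t\<close> is the output for the impulse input that is \<open>u\<close> at
  \<open>t\<close> and \<open>0\<close> elsewhere. So the same subspace witnesses both conditions.\<close>

lemma lin_subspace_Vsites: "lin_subspace (2*n) (Vsites n S)"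
  unfolding lin_subspace_def Vsites_def by auto

lemma lin_subspace_dsum_LG:
  assumes V: "lin_subspace m V" and G: "lin_subspace m G"
  shows "lin_subspace m (dsum_LG V G)"
proof -
  have carrier: "V \<subseteq> carrier_vec m" "G \<subseteq> carrier_vec m"
    using V G unfolding lin_subspace_def by auto
  have "dsum_LG V G \<subseteq> carrier_vec m"
    using carrier unfolding dsum_LG_def by (auto intro: add_carrier_vec)
  moreover have "0\<^sub>v m \<in> dsum_LG V G"
  proof -
    have "0\<^sub>v m = 0\<^sub>v m + (0\<^sub>v m :: bit vec)" by simp
    then show ?thesis using V G unfolding dsum_LG_def lin_subspace_def by blast
  qed
  moreover have "x + y \<in> dsum_LG V G" if xy: "x \<in> dsum_LG V G" "y \<in> dsum_LG V G" for x y
  proof -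
    obtain l g l' g' where lg: "x = l + g" "y = l' + g'" "l \<in> V" "g \<in> G" "l' \<in> V" "g' \<in> G"
      using xy unfolding dsum_LG_def by blast
    have "l \<in> carrier_vec m" "g \<in> carrier_vec m" "l' \<in> carrier_vec m" "g' \<in> carrier_vec m"
      using lg carrier by auto
    then have "x + y = (l + l') + (g + g')"
      unfolding lg by (intro eq_vecI) (auto simp: ac_simps)
    then show ?thesis using lg V G unfolding dsum_LG_def lin_subspace_def by blast
  qed
  moreover have "c \<cdot>\<^sub>v x \<in> dsum_LG V G" if x: "x \<in> dsum_LG V G" for c x
  proof -
    obtain l g where "x = l + g" "l \<in> V" "g \<in> G"
      using x unfolding dsum_LG_def by blast
    moreover from this have "c \<cdot>\<^sub>v x = c \<cdot>\<^sub>v l + c \<cdot>\<^sub>v g"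
      using carrier by (auto intro: smult_add_distrib_vec)
    ultimately show ?thesis using V G unfolding dsum_LG_def lin_subspace_def by blast
  qed
  ultimately show ?thesis unfolding lin_subspace_def by blast
qed

lemma finsum_vec_in_lin_subspace:
  assumes S: "lin_subspace m S" and "finite F" and "\<And>t. t \<in> F \<Longrightarrow> f t \<in> S"
  shows "finsum_vec TYPE(bit) m f F \<in> S"
  using assms(2,3)
proof (induction F rule: finite_induct)
  case empty
  then show ?case using S by (simp add: finsum_vec_empty lin_subspace_def)
next
  case (insert x F)
  have "f \<in> insert x F \<rightarrow> carrier_vec m"
    using insert.prems S unfolding lin_subspace_def by auto
  then have "finsum_vec TYPE(bit) m f (insert x F) = f x + finsum_vec TYPE(bit) m f F"
    using finsum_vec_insert[OF insert.hyps(1,2)] by auto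
  then show ?case using insert S unfolding lin_subspace_def by auto
qed

lemma finsum_vec_impulse:
  fixes A :: "nat \<Rightarrow> 'a :: comm_semiring_0 mat"
  assumes A: "A t \<in> carrier_mat r m" and u: "u \<in> carrier_vec m"
  defines "\<delta> \<equiv> \<lambda>s. if s = t then u else 0\<^sub>v m"
  shows "finsum_vec TYPE('a) r (\<lambda>s. A s *\<^sub>v \<delta> s) {s. \<delta> s \<noteq> 0\<^sub>v m} = A t *\<^sub>v u"
proof (cases "u = 0\<^sub>v m")
  case True
  then have "A t *\<^sub>v u = 0\<^sub>v r"
    using A by (intro eq_vecI) (auto simp: scalar_prod_def)
  with True show ?thesis by (simp add: \<delta>_def finsum_vec_empty)
next
  case False
  then have "{s. \<delta> s \<noteq> 0\<^sub>v m} = {t}" by (auto simp: \<delta>_def)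
  then show ?thesis
    using finsum_vec_insert[of "{}" t "\<lambda>s. A s *\<^sub>v \<delta> s" r] A u
    by (auto simp: finsum_vec_empty \<delta>_def)
qed

theorem lemma2:
  fixes n a k :: nat and W :: "bit mat"
  assumes "n \<ge> 3" and "1 \<le> a" and "1 \<le> k" and "a + k < n"
    and "W \<in> Sp2 n"
  shows "(\<exists>G. lin_subspace (2*n) G \<and> G \<subseteq> Vsites n {a+1..a+k} \<and>
            (\<forall>(t::nat) u. u \<in> Vsites n {1..a} \<longrightarrow>
               (W ^\<^sub>m t) *\<^sub>v u \<in> dsum_LG (Vsites n {1..a}) G))
     \<longleftrightarrow>
         (\<exists>G'. lin_subspace (2*n) G' \<and> G' \<subseteq> Vsites n {a+1..a+k} \<and>
            (\<forall>u :: nat \<Rightarrow> bit vec. (\<forall>t. u t \<in> Vsites n {1..a}) \<longrightarrow>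
               finite {t. u t \<noteq> 0\<^sub>v (2*n)} \<longrightarrow>
               finsum_vec TYPE(bit) (2*n) (\<lambda>t. (W ^\<^sub>m t) *\<^sub>v u t) {t. u t \<noteq> 0\<^sub>v (2*n)}
                 \<in> dsum_LG (Vsites n {1..a}) G'))"
    (is "(\<exists>G. ?subsp G \<and> ?central G \<and> ?wall_init G) \<longleftrightarrow>
          (\<exists>G'. ?subsp G' \<and> ?central G' \<and> ?wall_input G')")
proof -
  let ?VL = "Vsites n {1..a}"
  have W: "W \<in> carrier_mat (2*n) (2*n)" using assms(5) unfolding Sp2_def by auto
  have "?wall_init G \<longleftrightarrow> ?wall_input G" if "lin_subspace (2*n) G" for G
  proof
    assume "?wall_init G"
    then show "?wall_input G"
      by (auto intro: finsum_vec_in_lin_subspace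
          lin_subspace_dsum_LG[OF lin_subspace_Vsites \<open>lin_subspace (2*n) G\<close>])
  next
    assume input: "?wall_input G"
    show "?wall_init G"
    proof (intro allI impI)
      fix t :: nat and u assume u: "u \<in> ?VL"
      let ?\<delta> = "\<lambda>s. if s = t then u else 0\<^sub>v (2*n)"
      have impulse: "\<And>s. ?\<delta> s \<in> ?VL" "finite {s. ?\<delta> s \<noteq> 0\<^sub>v (2*n)}"
        using u lin_subspace_Vsites[of n "{1..a}"] unfolding lin_subspace_def by auto
      have "finsum_vec TYPE(bit) (2*n) (\<lambda>s. (W ^\<^sub>m s) *\<^sub>v ?\<delta> s) {s. ?\<delta> s \<noteq> 0\<^sub>v (2*n)}
          \<in> dsum_LG ?VL G" by (rule input[rule_format, OF impulse])
      then show "(W ^\<^sub>m t) *\<^sub>v u \<in> dsum_LG ?VL G"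
        using finsum_vec_impulse[of "\<lambda>s. W ^\<^sub>m s" t "2*n" "2*n" u] W u
        by (simp add: Vsites_def)
    qed
  qed
  then show ?thesis by blast
qed

end
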